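(* Let $n_1,n_2\ge 3$, let $\Gamma=C_{n_1}\Box C_{n_2}$ where all edges of the cycle $C_{n_1}$ have length $\ell_1>0$ and all edges of $C_{n_2}$ have length $\ell_2>0$, with $G=G_{n_1}\times G_{n_2}$ acting by the rotations. For $s\in\{0,\dots,n_1-1\}$, $t\in\{0,\dots,n_2-1\}$ put $a_s=\omega_1^s+\omega_1^{-s}=2\cos(2\pi s/n_1)$, $b_t=\omega_2^t+\omega_2^{-t}=2\cos(2\pi t/n_2)$ and $$\Sigma_{s,t}(k)=1-\tfrac12 a_s e^{ik\ell_1}-\tfrac12 b_t e^{ik\ell_2}+\tfrac12 a_s e^{ik(\ell_1+2\ell_2)}+\tfrac12 b_t e^{ik(2\ell_1+\ell_2)}-e^{2ik(\ell_1+\ell_2)}.$$ Then for every real $k\neq0$, $k^2$ is an eigenvalue of $\mathscr H_{s,t}$ if and only if $\Sigma_{s,t}(k)=0$.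
   Context: $C_n$ denotes the cycle graph on $n$ vertices $w_0,\dots,w_{n-1}$ with edges $w_jw_{j+1}$ (indices mod $n$); the cyclic group $G_n=\langle g\rangle$ acts by the rotation $g w_j=w_{j+1}$, mapping edges isometrically onto edges. The Cartesian product metric graph $\Gamma_{n_1}\Box\Gamma_{n_2}$ has vertex set $V(\Gamma_{n_1})\times V(\Gamma_{n_2})$; $(u,v)$ and $(u',v')$ are joined iff either $u=u'$ and $v\sim v'$ in $\Gamma_{n_2}$ (length of $vv'$), or $v=v'$ and $u\sim u'$ in $\Gamma_{n_1}$ (length of $uu'$). $G=G_{n_1}\times G_{n_2}$, $G_{n_i}=\langle g_i\rangle$, acts by $(g_1^\kappa,g_2^\iota)(u,v)=(g_1^\kappa u,g_2^\iota v)$, extended isometrically to edges; $(T_hf)(y)=f(hy)$ on $L^2(\Gamma)$ (functions square integrable on each edge). $\omega_i=e^{2\pi i/n_i}$; $\tau_{s,t}(g_1^\kappa,g_2^\iota)=\omega_1^{s\kappa}\omega_2^{t\iota}$; $\mathcal F_{s,t}=\{f\in L^2(\Gamma):T_hf=\overline{\tau_{s,t}(h)}f\ \forall h\in G\}$. Standard vertex conditions at a vertex $v$: continuity of $f$ at $v$ and $\sum_{e\ni v}f'|_e(v)=0$ with derivatives pointing into the edges. $\mathscr H=-d^2/dx^2$ on each edge with domain the functions that are $H^2$ on each edge and satisfy the standard conditions at all vertices. $\mathscr H_{s,t}$ is the restriction of $\mathscr H$ to $\mathcal D(\mathscr H)\cap\mathcal F_{s,t}$, a self-adjoint operator in $\mathcal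 F_{s,t}$. *)

theory Defs
  imports "HOL-Analysis.Analysis"
begin

text \<open>Hor i j joins vertex (i,j) (at parameter 0) to vertex ((i+1) mod n1, j) (at parameter l1);
  Ver i j joins vertex (i,j) (at parameter 0) to vertex (i, (j+1) mod n2) (at parameter l2).\<close>
datatype cedge = Hor nat nat | Ver nat nat

definition edges :: "nat \<Rightarrow> nat \<Rightarrow> cedge set" where
  "edges n1 n2 = {Hor i j | i j. i < n1 \<and> j < n2} \<union> {Ver i j | i j. i < n1 \<and> j < n2}"

fun elen :: "real \<Rightarrow> real \<Rightarrow> cedge \<Rightarrow> real" where
  "elen l1 l2 (Hor i j) = l1"
| "elen l1 l2 (Ver i j) = l2"

fun act :: "nat \<Rightarrow> nat \<Rightarrow> nat \<Rightarrow> nat \<Rightarrow> cedge \<Rightarrow> cedge" where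
  "act n1 n2 \<kappa> \<iota> (Hor i j) = Hor ((i + \<kappa>) mod n1) ((j + \<iota>) mod n2)"
| "act n1 n2 \<kappa> \<iota> (Ver i j) = Ver ((i + \<kappa>) mod n1) ((j + \<iota>) mod n2)"

definition omega :: "nat \<Rightarrow> complex" where
  "omega n = exp (2 * of_real pi * \<i> / of_nat n)"

text \<open>u \<in> H^2(0,L), with (classical, one-sided at endpoints) derivative u' and
  weak second derivative u'' \<in> L^2: u' is absolutely continuous with u' x = u' 0 + \<integral>_0^x u''.\<close>
definition H2_edge :: "real \<Rightarrow> (real \<Rightarrow> complex) \<Rightarrow> (real \<Rightarrow> complex) \<Rightarrow> (real \<Rightarrow> complex) \<Rightarrow> bool" where
  "H2_edge L u u' u'' \<longleftrightarrow>
     (\<forall>x\<in>{0..L}. (u has_vector_derivative u' x) (at x within {0..L})) \<and>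
     u'' absolutely_integrable_on {0..L} \<and>
     (\<lambda>x. (norm (u'' x))^2) integrable_on {0..L} \<and>
     (\<forall>x\<in>{0..L}. (u'' has_integral (u' x - u' 0)) {0..x})"

text \<open>Standard (continuity + Kirchhoff) conditions at every vertex (i,j);
  derivatives point into the edges.\<close>
definition std_conditions ::
  "nat \<Rightarrow> nat \<Rightarrow> real \<Rightarrow> real \<Rightarrow> (cedge \<Rightarrow> real \<Rightarrow> complex) \<Rightarrow> (cedge \<Rightarrow> real \<Rightarrow> complex) \<Rightarrow> bool" where
  "std_conditions n1 n2 l1 l2 f f' \<longleftrightarrow>
     (\<forall>i<n1. \<forall>j<n2.
        f (Hor i j) 0 = f (Hor ((i + n1 - 1) mod n1) j) l1 \<and>
        f (Hor i j) 0 = f (Ver i j) 0 \<and>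
        f (Hor i j) 0 = f (Ver i ((j + n2 - 1) mod n2)) l2 \<and>
        f' (Hor i j) 0 - f' (Hor ((i + n1 - 1) mod n1) j) l1
          + f' (Ver i j) 0 - f' (Ver i ((j + n2 - 1) mod n2)) l2 = 0)"

text \<open>f \<in> F_{s,t}: T_h f = conj(tau_{s,t}(h)) f (as L^2 functions) for all h = (g1^kappa, g2^iota).\<close>
definition in_F ::
  "nat \<Rightarrow> nat \<Rightarrow> real \<Rightarrow> real \<Rightarrow> nat \<Rightarrow> nat \<Rightarrow> (cedge \<Rightarrow> real \<Rightarrow> complex) \<Rightarrow> bool" where
  "in_F n1 n2 l1 l2 s t f \<longleftrightarrow>
     (\<forall>\<kappa> \<iota>. \<forall>e\<in>edges n1 n2.
        AE x in lebesgue. x \<in> {0..elen l1 l2 e} \<longrightarrow>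
          f (act n1 n2 \<kappa> \<iota> e) x = cnj (omega n1 ^ (s * \<kappa>) * omega n2 ^ (t * \<iota>)) * f e x)"

definition is_eigenvalue_Hst ::
  "nat \<Rightarrow> nat \<Rightarrow> real \<Rightarrow> real \<Rightarrow> nat \<Rightarrow> nat \<Rightarrow> real \<Rightarrow> bool" where
  "is_eigenvalue_Hst n1 n2 l1 l2 s t lam \<longleftrightarrow>
     (\<exists>f f' f''.
        (\<forall>e\<in>edges n1 n2. H2_edge (elen l1 l2 e) (f e) (f' e) (f'' e)) \<and>
        std_conditions n1 n2 l1 l2 f f' \<and>
        in_F n1 n2 l1 l2 s t f \<and>
        (\<exists>e\<in>edges n1 n2. \<not> (AE x in lebesgue. x \<in> {0..elen l1 l2 e} \<longrightarrow> f e x = 0)) \<and>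
        (\<forall>e\<in>edges n1 n2. AE x in lebesgue. x \<in> {0..elen l1 l2 e} \<longrightarrow>
            - f'' e x = of_real lam * f e x))"

definition Sigma_st :: "nat \<Rightarrow> nat \<Rightarrow> real \<Rightarrow> real \<Rightarrow> nat \<Rightarrow> nat \<Rightarrow> real \<Rightarrow> complex" where
  "Sigma_st n1 n2 l1 l2 s t k =
     (let a = complex_of_real (2 * cos (2 * pi * real s / real n1));
          b = complex_of_real (2 * cos (2 * pi * real t / real n2));
          E = (\<lambda>L. exp (\<i> * complex_of_real (k * L)))
      in 1 - a / 2 * E l1 - b / 2 * E l2 + a / 2 * E (l1 + 2 * l2)
           + b / 2 * E (2 * l1 + l2) - E (2 * (l1 + l2)))"

end

(* For k \<noteq> 0 an eigenfunction with eigenvalue k^2 solves u'' = -k^2 u on every edge, so on each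
   edge it is A cos kx + B sin kx.  Membership in F_{s,t} determines it from its restrictions g, h to
   the two edges leaving the vertex (0,0): on Hor i j it is conj(\<omega>1^(s i) \<omega>2^(t j)) g, and likewise
   with h on Ver i j.  All vertex conditions are then translates of those at (0,0), where the
   incoming edges carry p g and q h with p = \<omega>1^s, q = \<omega>2^t.  Writing g = A cos kx + B sin kx and
   h = A cos kx + D sin kx, these conditions form a homogeneous 3 x 3 linear system in (A, B, D)
   whose determinant is p q times
     sin(k l2) (a_s - 2 cos(k l1)) + sin(k l1) (b_t - 2 cos(k l2)),
   and \<Sigma>_{s,t}(k) is the same expression times i e^{ik(l1 + l2)}.  Conversely every nonzero
   solution of the system yields an eigenfunction by the same recipe. *)

theory Submission
  imports Defs
begin

definition sinusoid :: "real \<Rightarrow> complex \<Rightarrow> complex \<Rightarrow> real \<Rightarrow> complex" where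
  "sinusoid k A B x = A * of_real (cos (k * x)) + B * of_real (sin (k * x))"

lemma sinusoid_at_0 [simp]: "sinusoid k A B 0 = A"
  by (simp add: sinusoid_def)

lemma sinusoid_zero_coeffs [simp]: "sinusoid k 0 0 x = 0"
  by (simp add: sinusoid_def)

lemma mult_sinusoid: "c * sinusoid k A B x = sinusoid k (c * A) (c * B) x"
  by (simp add: sinusoid_def algebra_simps)

lemma sinusoid_diff: "sinusoid k A B x - sinusoid k A' B' x = sinusoid k (A - A') (B - B') x"
  by (simp add: sinusoid_def algebra_simps)

lemma continuous_on_sinusoid [continuous_intros]: "continuous_on S (sinusoid k A B)"
  unfolding sinusoid_def[abs_def] by (intro continuous_intros)

lemma has_vector_derivative_sinusoid:
  "(sinusoid k A B has_vector_derivative sinusoid k (of_real k * B) (- (of_real k * A)) x) (at x within S)"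
  unfolding sinusoid_def[abs_def] by (auto intro!: derivative_eq_intros simp: algebra_simps)

lemma of_real_cos_sq_add_sin_sq: "(complex_of_real (cos x))\<^sup>2 + (complex_of_real (sin x))\<^sup>2 = 1"
  unfolding of_real_power[symmetric] of_real_add[symmetric] by simp

lemma continuous_on_AE_zero:
  fixes g :: "real \<Rightarrow> complex"
  assumes cont: "continuous_on {0..L} g" and "0 < L"
    and ae: "AE x in lebesgue. x \<in> {0..L} \<longrightarrow> g x = 0" and x: "x \<in> {0..L}"
  shows "g x = 0"
proof -
  obtain N where N: "negligible N" "{x. \<not> (x \<in> {0..L} \<longrightarrow> g x = 0)} \<subseteq> N"
    using ae unfolding eventually_ae_filter_negligible by blast
  have "integral {0..y} g = 0" if "y \<in> {0..L}" for y
  proof (rule integral_unique, rule has_integral_spike[OF N(1)])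
    show "((\<lambda>_. 0) has_integral 0) {0..y}" by simp
    show "g z = 0" if "z \<in> {0..y} - N" for z
      using N(2) that \<open>y \<in> {0..L}\<close> by force
  qed
  then have "((\<lambda>y. integral {0..y} g) has_vector_derivative 0) (at x within {0..L})"
    by (rule has_vector_derivative_transform[OF x, of _ "\<lambda>_. 0"]) simp_all
  moreover have "((\<lambda>y. integral {0..y} g) has_vector_derivative g x) (at x within {0..L})"
    by (rule integral_has_vector_derivative[OF cont x])
  ultimately show ?thesis
    using vector_derivative_unique_within_closed_interval[of 0 L x] \<open>0 < L\<close> x by auto
qed

lemma sinusoid_coeffs_eq_if_AE_eq:
  assumes "0 < L" and "k \<noteq> 0"
    and "AE x in lebesgue. x \<in> {0..L} \<longrightarrow> sinusoid k A B x = sinusoid k A' B' x"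
  shows "A = A' \<and> B = B'"
proof -
  have "AE x in lebesgue. x \<in> {0..L} \<longrightarrow> sinusoid k (A - A') (B - B') x = 0"
    using assms(3) by eventually_elim (simp add: sinusoid_diff[symmetric])
  then have zero: "sinusoid k (A - A') (B - B') x = 0" if "x \<in> {0..L}" for x
    using continuous_on_AE_zero[OF continuous_on_sinusoid assms(1)] that by blast
  have "0 \<in> {0..L}"
    using assms(1) by simp
  have "(sinusoid k (A - A') (B - B') has_vector_derivative 0) (at 0 within {0..L})"
    by (rule has_vector_derivative_transform[OF \<open>0 \<in> {0..L}\<close>, of _ "\<lambda>_. 0"]) (simp_all add: zero)
  from vector_derivative_unique_within_closed_interval[of 0 L 0, unfolded cbox_interval,
      OF assms(1) \<open>0 \<in> {0..L}\<close> has_vector_derivative_sinusoid this]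
  have "B = B'"
    using assms(2) by simp
  with zero[OF \<open>0 \<in> {0..L}\<close>] show ?thesis
    by simp
qed

section \<open>The eigenvalue equation on one edge\<close>

lemma harmonic_oscillator_invariant:
  fixes u v :: "real \<Rightarrow> complex"
  assumes "k \<noteq> 0"
    and u: "\<And>y. y \<in> {0..L} \<Longrightarrow> (u has_vector_derivative v y) (at y within {0..L})"
    and v: "\<And>y. y \<in> {0..L} \<Longrightarrow> (v has_vector_derivative - of_real (k\<^sup>2) * u y) (at y within {0..L})"
    and x: "x \<in> {0..L}"
  shows "u x * of_real (cos (k * x + \<theta>)) - v x / of_real k * of_real (sin (k * x + \<theta>))
    = u 0 * of_real (cos \<theta>) - v 0 / of_real k * of_real (sin \<theta>)"
proof -
  define I where "I y = u y * of_real (cos (k * y + \<theta>)) - v y / of_real k * of_real (sin (k * y + \<theta>))"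
    for y
  have "(I has_vector_derivative 0) (at y within {0..L})" if "y \<in> {0..L}" for y
    unfolding I_def[abs_def] using \<open>k \<noteq> 0\<close>
    by (auto intro!: derivative_eq_intros u v that simp: field_simps power2_eq_square)
  then obtain c where "\<And>y. y \<in> {0..L} \<Longrightarrow> I y = c"
    using has_vector_derivative_zero_constant[of "{0..L}" I] by auto
  from this[OF x] this[of 0] x show ?thesis
    by (simp add: I_def)
qed

lemma harmonic_oscillator_solution:
  fixes u v :: "real \<Rightarrow> complex"
  assumes "k \<noteq> 0"
    and "\<And>y. y \<in> {0..L} \<Longrightarrow> (u has_vector_derivative v y) (at y within {0..L})"
    and "\<And>y. y \<in> {0..L} \<Longrightarrow> (v has_vector_derivative - of_real (k\<^sup>2) * u y) (at y within {0..L})"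
    and "x \<in> {0..L}"
  shows "u x = sinusoid k (u 0) (v 0 / of_real k) x"
proof -
  let ?c = "complex_of_real (cos (k * x))" and ?s = "complex_of_real (sin (k * x))"
  let ?w = "v x / of_real k"
  have "u x * ?c - ?w * ?s = u 0"
    using harmonic_oscillator_invariant[OF assms, of 0] by simp
  moreover have "u x * ?s + ?w * ?c = v 0 / of_real k"
    using harmonic_oscillator_invariant[OF assms, of "- (pi / 2)"] by (simp add: cos_diff sin_diff)
  moreover have "u x = (u x * ?c - ?w * ?s) * ?c + (u x * ?s + ?w * ?c) * ?s"
    using of_real_cos_sq_add_sin_sq[of "k * x"] by algebra
  ultimately show ?thesis
    by (simp add: sinusoid_def)
qed

lemma H2_edge_eigen_deriv:
  assumes H2: "H2_edge L u u' u''"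
    and eigen: "AE x in lebesgue. x \<in> {0..L} \<longrightarrow> - u'' x = of_real \<mu> * u x"
    and x: "x \<in> {0..L}"
  shows "(u' has_vector_derivative - of_real \<mu> * u x) (at x within {0..L})"
proof -
  have "continuous_on {0..L} u"
    using H2 by (intro continuous_on_vector_derivative) (auto simp: H2_edge_def)
  then have cont: "continuous_on {0..L} (\<lambda>y. - of_real \<mu> * u y)"
    by (intro continuous_intros)
  obtain N where N: "negligible N" "{x. \<not> (x \<in> {0..L} \<longrightarrow> - u'' x = of_real \<mu> * u x)} \<subseteq> N"
    using eigen unfolding eventually_ae_filter_negligible by blast
  have "u' y = u' 0 + integral {0..y} (\<lambda>z. - of_real \<mu> * u z)" if "y \<in> {0..L}" for y
  proof -
    have "((\<lambda>z. - of_real \<mu> * u z) has_integral u' y - u' 0) {0..y}"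
    proof (rule has_integral_spike[OF N(1)])
      show "(u'' has_integral u' y - u' 0) {0..y}"
        using H2 that by (simp add: H2_edge_def)
      show "- of_real \<mu> * u z = u'' z" if "z \<in> {0..y} - N" for z
      proof -
        have "- u'' z = of_real \<mu> * u z"
          using N(2) that \<open>y \<in> {0..L}\<close> by force
        then show ?thesis by (simp add: minus_equation_iff)
      qed
    qed
    then have "integral {0..y} (\<lambda>z. - of_real \<mu> * u z) = u' y - u' 0"
      by (rule integral_unique)
    then show ?thesis by (metis add.commute diff_add_cancel)
  qed
  moreover have "((\<lambda>y. u' 0 + integral {0..y} (\<lambda>z. - of_real \<mu> * u z)) has_vector_derivative
      0 + - of_real \<mu> * u x) (at x within {0..L})"
    by (intro has_vector_derivative_add has_vector_derivative_const integral_has_vector_derivative cont x)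
  ultimately show ?thesis
    unfolding add_0_left by (rule has_vector_derivative_transform[OF x]) simp
qed

lemma H2_edge_eigen_sinusoid:
  assumes "k \<noteq> 0" and H2: "H2_edge L u u' u''"
    and eigen: "AE x in lebesgue. x \<in> {0..L} \<longrightarrow> - u'' x = of_real (k\<^sup>2) * u x"
    and x: "x \<in> {0..L}"
  shows "u x = sinusoid k (u 0) (u' 0 / of_real k) x"
    and "u' x = sinusoid k (u' 0) (- (of_real k * u 0)) x"
proof -
  have u: "(u has_vector_derivative u' y) (at y within {0..L})" if "y \<in> {0..L}" for y
    using H2 that by (simp add: H2_edge_def)
  have u': "(u' has_vector_derivative - of_real (k\<^sup>2) * u y) (at y within {0..L})" if "y \<in> {0..L}" for y
    using H2_edge_eigen_deriv[OF H2 eigen that] .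
  show "u x = sinusoid k (u 0) (u' 0 / of_real k) x"
    using harmonic_oscillator_solution[OF \<open>k \<noteq> 0\<close> u u' x] .
  have "((\<lambda>y. - of_real (k\<^sup>2) * u y) has_vector_derivative - of_real (k\<^sup>2) * u' y) (at y within {0..L})"
    if "y \<in> {0..L}" for y
    using u[OF that] by (rule has_vector_derivative_mult_right)
  from harmonic_oscillator_solution[OF \<open>k \<noteq> 0\<close> u' this x]
  show "u' x = sinusoid k (u' 0) (- (of_real k * u 0)) x"
    using \<open>k \<noteq> 0\<close> by (simp add: power2_eq_square)
qed

lemma H2_edge_sinusoid:
  "H2_edge L (sinusoid k A B) (sinusoid k (of_real k * B) (- (of_real k * A)))
     (\<lambda>x. - of_real (k\<^sup>2) * sinusoid k A B x)"
  unfolding H2_edge_def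
proof (intro conjI ballI)
  have second_deriv: "(sinusoid k (of_real k * B) (- (of_real k * A)) has_vector_derivative
      - of_real (k\<^sup>2) * sinusoid k A B x) (at x within S)" for x S
    using has_vector_derivative_sinusoid[of k "of_real k * B" "- (of_real k * A)" x S]
    by (simp add: sinusoid_def algebra_simps power2_eq_square)
  have cont: "continuous_on {0..L} (\<lambda>x. - of_real (k\<^sup>2) * sinusoid k A B x)"
    by (intro continuous_intros)
  show "(\<lambda>x. - of_real (k\<^sup>2) * sinusoid k A B x) absolutely_integrable_on {0..L}"
    using cont by (rule absolutely_integrable_continuous_real)
  show "(\<lambda>x. (norm (- of_real (k\<^sup>2) * sinusoid k A B x))\<^sup>2) integrable_on {0..L}"
    using cont by (intro integrable_continuous_real continuous_intros)
  fix x assume "x \<in> {0..L}"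
  show "(sinusoid k A B has_vector_derivative sinusoid k (of_real k * B) (- (of_real k * A)) x)
      (at x within {0..L})"
    by (rule has_vector_derivative_sinusoid)
  show "((\<lambda>x. - of_real (k\<^sup>2) * sinusoid k A B x) has_integral
      sinusoid k (of_real k * B) (- (of_real k * A)) x - sinusoid k (of_real k * B) (- (of_real k * A)) 0) {0..x}"
    using \<open>x \<in> {0..L}\<close> by (intro fundamental_theorem_of_calculus second_deriv) auto
qed

lemma H2_edge_mult:
  assumes "H2_edge L u u' u''"
  shows "H2_edge L (\<lambda>x. c * u x) (\<lambda>x. c * u' x) (\<lambda>x. c * u'' x)"
  unfolding H2_edge_def
proof (intro conjI ballI)
  have "(\<lambda>x. (norm (u'' x))\<^sup>2) integrable_on {0..L}"
    using assms by (simp add: H2_edge_def)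
  then have "(\<lambda>x. (norm c)\<^sup>2 * (norm (u'' x))\<^sup>2) integrable_on {0..L}"
    by (rule integrable_on_mult_right)
  then show "(\<lambda>x. (norm (c * u'' x))\<^sup>2) integrable_on {0..L}"
    by (simp add: norm_mult power_mult_distrib)
  show "(\<lambda>x. c * u'' x) absolutely_integrable_on {0..L}"
    using assms by (simp add: H2_edge_def)
  fix x assume x: "x \<in> {0..L}"
  show "((\<lambda>x. c * u x) has_vector_derivative c * u' x) (at x within {0..L})"
    using assms x by (intro has_vector_derivative_mult_right) (simp add: H2_edge_def)
  show "((\<lambda>x. c * u'' x) has_integral c * u' x - c * u' 0) {0..x}"
    using assms x has_integral_mult_right[of u'' "u' x - u' 0" "{0..x}" c]
    by (simp add: H2_edge_def right_diff_distrib)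
qed

section \<open>Bloch functions on the torus graph\<close>

definition phase :: "nat \<Rightarrow> nat \<Rightarrow> complex" where
  "phase n s = cnj (omega n ^ s)"

lemma cnj_omega_pow_mult:
  "cnj (omega n1 ^ (s * \<kappa>) * omega n2 ^ (t * \<iota>)) = phase n1 s ^ \<kappa> * phase n2 t ^ \<iota>"
  by (simp add: phase_def power_mult)

lemma omega_eq_cis: "omega n = cis (2 * pi / real n)"
  unfolding omega_def cis_conv_exp by (simp add: field_simps)

lemma phase_eq_cis: "phase n s = cis (- (2 * pi * real s / real n))"
  unfolding phase_def omega_eq_cis Complex.DeMoivre cis_cnj by (simp add: field_simps)

lemma phase_pow_eq_1: "phase n s ^ n = 1"
proof (cases "n = 0")
  case False
  then have "phase n s ^ n = cis (- (2 * pi * real s))"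
    by (simp add: phase_eq_cis Complex.DeMoivre)
  also have "\<dots> = inverse (cis (2 * pi * real s))"
    by (simp only: cis_inverse)
  also have "cis (2 * pi * real s) = 1"
    by (rule cis_multiple_2pi) simp
  finally show ?thesis
    by simp
qed simp

lemma phase_power_mod: "phase n s ^ (m mod n) = phase n s ^ m"
proof -
  have "phase n s ^ m = phase n s ^ (n * (m div n) + m mod n)"
    by simp
  also have "\<dots> = (phase n s ^ n) ^ (m div n) * phase n s ^ (m mod n)"
    by (simp only: power_add power_mult)
  finally show ?thesis
    by (simp add: phase_pow_eq_1)
qed

lemma phase_power_shift:
  assumes "0 < n"
  shows "phase n s ^ ((i + n - 1) mod n) = phase n s ^ i * phase n s ^ (n - 1)"
proof -
  have "i + n - 1 = i + (n - 1)" using assms by simp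
  then show ?thesis by (simp only: phase_power_mod power_add)
qed

lemma phase_mult_pow_pred:
  assumes "0 < n"
  shows "phase n s * phase n s ^ (n - 1) = 1"
proof -
  have "phase n s * phase n s ^ (n - 1) = phase n s ^ Suc (n - 1)"
    by (simp only: power_Suc)
  also have "Suc (n - 1) = n"
    using assms by simp
  finally show ?thesis
    by (simp only: phase_pow_eq_1)
qed

lemma phase_pow_pred_add_phase:
  assumes "0 < n"
  shows "phase n s ^ (n - 1) + phase n s = of_real (2 * cos (2 * pi * real s / real n))"
  unfolding inverse_unique[OF phase_mult_pow_pred[OF assms], symmetric]
  by (simp add: phase_eq_cis complex_eq_iff)

fun bloch ::
  "complex \<Rightarrow> complex \<Rightarrow> (real \<Rightarrow> complex) \<Rightarrow> (real \<Rightarrow> complex) \<Rightarrow> cedge \<Rightarrow> real \<Rightarrow> complex"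
  where
    "bloch \<alpha> \<beta> g h (Hor i j) = (\<lambda>x. \<alpha> ^ i * \<beta> ^ j * g x)"
  | "bloch \<alpha> \<beta> g h (Ver i j) = (\<lambda>x. \<alpha> ^ i * \<beta> ^ j * h x)"

lemma in_F_bloch: "in_F n1 n2 l1 l2 s t (bloch (phase n1 s) (phase n2 t) g h)"
  unfolding in_F_def cnj_omega_pow_mult
proof (intro allI ballI AE_I2 impI)
  fix \<kappa> \<iota> e x
  show "bloch (phase n1 s) (phase n2 t) g h (act n1 n2 \<kappa> \<iota> e) x =
      phase n1 s ^ \<kappa> * phase n2 t ^ \<iota> * bloch (phase n1 s) (phase n2 t) g h e x"
    by (cases e) (simp_all add: phase_power_mod power_add mult_ac)
qed

lemma H2_edge_bloch:
  assumes "H2_edge l1 g g' g''" and "H2_edge l2 h h' h''"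
  shows "H2_edge (elen l1 l2 e) (bloch \<alpha> \<beta> g h e) (bloch \<alpha> \<beta> g' h' e) (bloch \<alpha> \<beta> g'' h'' e)"
  using assms by (cases e) (simp_all add: H2_edge_mult)

(* The standard conditions at the vertex (0,0) for a function that equals g on the edge Hor 0 0,
   h on Ver 0 0, p g on the incoming edge Hor (n1 - 1) 0 and q h on Ver 0 (n2 - 1), the
   derivatives being g', h' (times p, q on the incoming edges). *)
definition vertex_conditions ::
  "complex \<Rightarrow> complex \<Rightarrow> real \<Rightarrow> real \<Rightarrow> (real \<Rightarrow> complex) \<Rightarrow> (real \<Rightarrow> complex) \<Rightarrow>
     (real \<Rightarrow> complex) \<Rightarrow> (real \<Rightarrow> complex) \<Rightarrow> bool" where
  "vertex_conditions p q l1 l2 g h g' h' \<longleftrightarrow>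
     g 0 = h 0 \<and> g 0 = p * g l1 \<and> g 0 = q * h l2 \<and> g' 0 - p * g' l1 + h' 0 - q * h' l2 = 0"

lemma vertex_conditions_cong:
  assumes "\<forall>y\<in>{0, l1}. g y = G y \<and> g' y = G' y" and "\<forall>y\<in>{0, l2}. h y = H y \<and> h' y = H' y"
  shows "vertex_conditions p q l1 l2 g h g' h' \<longleftrightarrow> vertex_conditions p q l1 l2 G H G' H'"
  using assms by (simp add: vertex_conditions_def)

lemma std_conditions_bloch:
  assumes "0 < n1" and "0 < n2"
    and "vertex_conditions (phase n1 s ^ (n1 - 1)) (phase n2 t ^ (n2 - 1)) l1 l2 g h g' h'"
  shows "std_conditions n1 n2 l1 l2
    (bloch (phase n1 s) (phase n2 t) g h) (bloch (phase n1 s) (phase n2 t) g' h')"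
  unfolding std_conditions_def bloch.simps
    phase_power_shift[OF \<open>0 < n1\<close>] phase_power_shift[OF \<open>0 < n2\<close>]
proof (intro allI impI conjI)
  fix i j
  let ?c = "phase n1 s ^ i * phase n2 t ^ j"
  let ?p = "phase n1 s ^ (n1 - 1)" and ?q = "phase n2 t ^ (n2 - 1)"
  have vc: "g 0 = h 0" "g 0 = ?p * g l1" "g 0 = ?q * h l2" "g' 0 - ?p * g' l1 + h' 0 - ?q * h' l2 = 0"
    using assms(3) unfolding vertex_conditions_def by blast+
  show "?c * g 0 = phase n1 s ^ i * ?p * phase n2 t ^ j * g l1"
    by (subst vc(2)) (simp only: mult_ac)
  show "?c * g 0 = ?c * h 0"
    by (simp only: vc(1))
  show "?c * g 0 = phase n1 s ^ i * (phase n2 t ^ j * ?q) * h l2"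
    by (subst vc(3)) (simp only: mult_ac)
  have "?c * g' 0 - phase n1 s ^ i * ?p * phase n2 t ^ j * g' l1
      + ?c * h' 0 - phase n1 s ^ i * (phase n2 t ^ j * ?q) * h' l2
    = ?c * (g' 0 - ?p * g' l1 + h' 0 - ?q * h' l2)"
    by (simp only: algebra_simps)
  then show "?c * g' 0 - phase n1 s ^ i * ?p * phase n2 t ^ j * g' l1
      + ?c * h' 0 - phase n1 s ^ i * (phase n2 t ^ j * ?q) * h' l2 = 0"
    by (simp only: vc(4) mult_zero_right)
qed

section \<open>Eigenfunctions of the fibre operator\<close>

lemma elen_pos: "0 < l1 \<Longrightarrow> 0 < l2 \<Longrightarrow> 0 < elen l1 l2 e"
  by (cases e) auto

lemma elen_act [simp]: "elen l1 l2 (act n1 n2 \<kappa> \<iota> e) = elen l1 l2 e"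
  by (cases e) auto

lemma act_in_edges: "0 < n1 \<Longrightarrow> 0 < n2 \<Longrightarrow> act n1 n2 \<kappa> \<iota> e \<in> edges n1 n2"
  by (cases e) (auto simp: edges_def)

lemma origin_edges_in_edges: "0 < n1 \<Longrightarrow> 0 < n2 \<Longrightarrow> Hor 0 0 \<in> edges n1 n2 \<and> Ver 0 0 \<in> edges n1 n2"
  by (simp add: edges_def)

lemma edges_eq_act_origin:
  assumes "e \<in> edges n1 n2"
  obtains i j where "e = act n1 n2 i j (Hor 0 0)" | i j where "e = act n1 n2 i j (Ver 0 0)"
proof -
  consider (Hor) i j where "e = Hor i j" "i < n1" "j < n2" | (Ver) i j where "e = Ver i j" "i < n1" "j < n2"
    using assms unfolding edges_def by blast
  then show ?thesis
  proof cases
    case (Hor i j)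
    then have "e = act n1 n2 i j (Hor 0 0)" by simp
    then show ?thesis by (rule that(1))
  next
    case (Ver i j)
    then have "e = act n1 n2 i j (Ver 0 0)" by simp
    then show ?thesis by (rule that(2))
  qed
qed

locale Hst_eigenfunction =
  fixes n1 n2 s t :: nat and l1 l2 k :: real and f f' f'' :: "cedge \<Rightarrow> real \<Rightarrow> complex"
  assumes n_pos: "0 < n1" "0 < n2" and l_pos: "0 < l1" "0 < l2" and k_nonzero: "k \<noteq> 0"
    and H2: "\<forall>e\<in>edges n1 n2. H2_edge (elen l1 l2 e) (f e) (f' e) (f'' e)"
    and std: "std_conditions n1 n2 l1 l2 f f'"
    and inF: "in_F n1 n2 l1 l2 s t f"
    and eigen: "\<forall>e\<in>edges n1 n2. AE x in lebesgue.
      x \<in> {0..elen l1 l2 e} \<longrightarrow> - f'' e x = of_real (k\<^sup>2) * f e x"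
begin

lemma origin_edges: "Hor 0 0 \<in> edges n1 n2" "Ver 0 0 \<in> edges n1 n2"
  using origin_edges_in_edges[OF n_pos] by blast+

lemma edge_sinusoid:
  assumes "e \<in> edges n1 n2" and "x \<in> {0..elen l1 l2 e}"
  shows "f e x = sinusoid k (f e 0) (f' e 0 / of_real k) x"
    and "f' e x = sinusoid k (f' e 0) (- (of_real k * f e 0)) x"
proof -
  have "H2_edge (elen l1 l2 e) (f e) (f' e) (f'' e)"
    using H2 assms(1) by blast
  moreover have "AE x in lebesgue. x \<in> {0..elen l1 l2 e} \<longrightarrow> - f'' e x = of_real (k\<^sup>2) * f e x"
    using eigen assms(1) by blast
  ultimately show "f e x = sinusoid k (f e 0) (f' e 0 / of_real k) x"
    and "f' e x = sinusoid k (f' e 0) (- (of_real k * f e 0)) x"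
    using H2_edge_eigen_sinusoid[OF k_nonzero _ _ assms(2)] by blast+
qed

(* edge_sinusoid must not be used as an unrestricted simp rule: its right-hand side contains
   f e 0, an instance of its left-hand side. *)

lemma eigenfunction_act_at_0:
  fixes \<kappa> \<iota> :: nat
  assumes e: "e \<in> edges n1 n2"
  defines "c \<equiv> phase n1 s ^ \<kappa> * phase n2 t ^ \<iota>"
  shows "f (act n1 n2 \<kappa> \<iota> e) 0 = c * f e 0" and "f' (act n1 n2 \<kappa> \<iota> e) 0 = c * f' e 0"
proof -
  let ?e = "act n1 n2 \<kappa> \<iota> e"
  have e': "?e \<in> edges n1 n2"
    using n_pos by (rule act_in_edges)
  have "AE y in lebesgue. y \<in> {0..elen l1 l2 e} \<longrightarrow> f ?e y = c * f e y"
    using inF e unfolding in_F_def c_def cnj_omega_pow_mult by blast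
  then have "AE y in lebesgue. y \<in> {0..elen l1 l2 e} \<longrightarrow>
      sinusoid k (f ?e 0) (f' ?e 0 / of_real k) y = sinusoid k (c * f e 0) (c * (f' e 0 / of_real k)) y"
  proof eventually_elim
    case (elim y)
    show ?case
    proof
      assume y: "y \<in> {0..elen l1 l2 e}"
      then have "y \<in> {0..elen l1 l2 ?e}"
        by simp
      then have "sinusoid k (f ?e 0) (f' ?e 0 / of_real k) y = f ?e y"
        by (rule edge_sinusoid(1)[OF e', symmetric])
      also have "\<dots> = c * sinusoid k (f e 0) (f' e 0 / of_real k) y"
        using elim y by (simp only: edge_sinusoid(1)[OF e y, symmetric])
      finally show "sinusoid k (f ?e 0) (f' ?e 0 / of_real k) y
          = sinusoid k (c * f e 0) (c * (f' e 0 / of_real k)) y"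
        by (simp only: mult_sinusoid)
    qed
  qed
  from sinusoid_coeffs_eq_if_AE_eq[OF elen_pos[OF l_pos] k_nonzero this]
  show "f ?e 0 = c * f e 0" and "f' ?e 0 = c * f' e 0"
    using k_nonzero by auto
qed

lemma eigenfunction_act:
  fixes \<kappa> \<iota> :: nat
  assumes e: "e \<in> edges n1 n2" and x: "x \<in> {0..elen l1 l2 e}"
  defines "c \<equiv> phase n1 s ^ \<kappa> * phase n2 t ^ \<iota>"
  shows "f (act n1 n2 \<kappa> \<iota> e) x = c * f e x" and "f' (act n1 n2 \<kappa> \<iota> e) x = c * f' e x"
proof -
  have e': "act n1 n2 \<kappa> \<iota> e \<in> edges n1 n2"
    using n_pos by (rule act_in_edges)
  have x': "x \<in> {0..elen l1 l2 (act n1 n2 \<kappa> \<iota> e)}"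
    using x by simp
  note coeffs = eigenfunction_act_at_0[OF e, of \<kappa> \<iota>, folded c_def]
  show "f (act n1 n2 \<kappa> \<iota> e) x = c * f e x"
    unfolding edge_sinusoid(1)[OF e' x'] edge_sinusoid(1)[OF e x] coeffs
    by (simp add: mult_sinusoid)
  show "f' (act n1 n2 \<kappa> \<iota> e) x = c * f' e x"
    unfolding edge_sinusoid(2)[OF e' x'] edge_sinusoid(2)[OF e x] coeffs
    by (simp add: mult_sinusoid algebra_simps)
qed

lemma vertex_conditions_origin:
  "vertex_conditions (phase n1 s ^ (n1 - 1)) (phase n2 t ^ (n2 - 1)) l1 l2
     (f (Hor 0 0)) (f (Ver 0 0)) (f' (Hor 0 0)) (f' (Ver 0 0))"
proof -
  have origin: "f (Hor 0 0) 0 = f (Hor (n1 - 1) 0) l1 \<and> f (Hor 0 0) 0 = f (Ver 0 0) 0 \<and>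
      f (Hor 0 0) 0 = f (Ver 0 (n2 - 1)) l2 \<and>
      f' (Hor 0 0) 0 - f' (Hor (n1 - 1) 0) l1 + f' (Ver 0 0) 0 - f' (Ver 0 (n2 - 1)) l2 = 0"
    using std n_pos unfolding std_conditions_def by fastforce
  have incoming: "f (Hor (n1 - 1) 0) l1 = phase n1 s ^ (n1 - 1) * f (Hor 0 0) l1"
    "f' (Hor (n1 - 1) 0) l1 = phase n1 s ^ (n1 - 1) * f' (Hor 0 0) l1"
    "f (Ver 0 (n2 - 1)) l2 = phase n2 t ^ (n2 - 1) * f (Ver 0 0) l2"
    "f' (Ver 0 (n2 - 1)) l2 = phase n2 t ^ (n2 - 1) * f' (Ver 0 0) l2"
    using eigenfunction_act[OF origin_edges(1), of l1 "n1 - 1" 0]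
      eigenfunction_act[OF origin_edges(2), of l2 0 "n2 - 1"] l_pos n_pos by simp_all
  show ?thesis
    using origin unfolding vertex_conditions_def incoming by blast
qed

lemma vertex_conditions_origin_sinusoid:
  defines "A \<equiv> f (Hor 0 0) 0" and "B \<equiv> f' (Hor 0 0) 0 / of_real k"
    and "D \<equiv> f' (Ver 0 0) 0 / of_real k"
  shows "vertex_conditions (phase n1 s ^ (n1 - 1)) (phase n2 t ^ (n2 - 1)) l1 l2
    (sinusoid k A B) (sinusoid k A D)
    (sinusoid k (of_real k * B) (- (of_real k * A))) (sinusoid k (of_real k * D) (- (of_real k * A)))"
proof -
  have "f (Ver 0 0) 0 = A"
    using vertex_conditions_origin by (simp add: vertex_conditions_def A_def)
  moreover have "f (Hor 0 0) l1 = sinusoid k A B l1"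
    "f' (Hor 0 0) l1 = sinusoid k (of_real k * B) (- (of_real k * A)) l1"
    "f (Ver 0 0) l2 = sinusoid k A D l2"
    "f' (Ver 0 0) l2 = sinusoid k (of_real k * D) (- (of_real k * A)) l2"
    using edge_sinusoid[OF origin_edges(1), of l1] edge_sinusoid[OF origin_edges(2), of l2]
      l_pos k_nonzero \<open>f (Ver 0 0) 0 = A\<close> by (simp_all add: A_def B_def D_def)
  ultimately have "\<forall>y\<in>{0, l1}. f (Hor 0 0) y = sinusoid k A B y \<and>
      f' (Hor 0 0) y = sinusoid k (of_real k * B) (- (of_real k * A)) y"
    and "\<forall>y\<in>{0, l2}. f (Ver 0 0) y = sinusoid k A D y \<and>
      f' (Ver 0 0) y = sinusoid k (of_real k * D) (- (of_real k * A)) y"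
    using k_nonzero by (simp_all add: A_def B_def D_def)
  with vertex_conditions_origin show ?thesis
    using vertex_conditions_cong by blast
qed

lemma eigenfunction_vanishes_if_origin_data_vanish:
  assumes "f (Hor 0 0) 0 = 0" and "f' (Hor 0 0) 0 = 0" and "f' (Ver 0 0) 0 = 0"
    and e: "e \<in> edges n1 n2" and x: "x \<in> {0..elen l1 l2 e}"
  shows "f e x = 0"
proof -
  have "f (Ver 0 0) 0 = 0"
    using vertex_conditions_origin assms(1) by (simp add: vertex_conditions_def)
  then have origin_zero: "f b y = 0" if "b \<in> {Hor 0 0, Ver 0 0}" "y \<in> {0..elen l1 l2 b}" for b y
    using that assms(1-3) edge_sinusoid(1)[OF origin_edges(1), of y]
      edge_sinusoid(1)[OF origin_edges(2), of y] by auto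
  from e show ?thesis
  proof (cases rule: edges_eq_act_origin)
    case (1 i j)
    with x eigenfunction_act(1)[OF origin_edges(1), of x i j] origin_zero[of "Hor 0 0" x]
    show ?thesis by simp
  next
    case (2 i j)
    with x eigenfunction_act(1)[OF origin_edges(2), of x i j] origin_zero[of "Ver 0 0" x]
    show ?thesis by simp
  qed
qed

end

definition has_nontrivial_vertex_solution :: "complex \<Rightarrow> complex \<Rightarrow> real \<Rightarrow> real \<Rightarrow> real \<Rightarrow> bool" where
  "has_nontrivial_vertex_solution p q k l1 l2 \<longleftrightarrow>
     (\<exists>A B D. (A \<noteq> 0 \<or> B \<noteq> 0 \<or> D \<noteq> 0) \<and>
        vertex_conditions p q l1 l2 (sinusoid k A B) (sinusoid k A D)
          (sinusoid k (of_real k * B) (- (of_real k * A))) (sinusoid k (of_real k * D) (- (of_real k * A))))"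

lemma eigenvalue_imp_nontrivial_vertex_solution:
  assumes "0 < n1" "0 < n2" "0 < l1" "0 < l2" "k \<noteq> 0"
    and "is_eigenvalue_Hst n1 n2 l1 l2 s t (k\<^sup>2)"
  shows "has_nontrivial_vertex_solution (phase n1 s ^ (n1 - 1)) (phase n2 t ^ (n2 - 1)) k l1 l2"
proof -
  obtain f f' f'' where H2: "\<forall>e\<in>edges n1 n2. H2_edge (elen l1 l2 e) (f e) (f' e) (f'' e)"
    and std: "std_conditions n1 n2 l1 l2 f f'" and inF: "in_F n1 n2 l1 l2 s t f"
    and nonzero: "\<exists>e\<in>edges n1 n2. \<not> (AE x in lebesgue. x \<in> {0..elen l1 l2 e} \<longrightarrow> f e x = 0)"
    and eigen: "\<forall>e\<in>edges n1 n2. AE x in lebesgue.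
      x \<in> {0..elen l1 l2 e} \<longrightarrow> - f'' e x = of_real (k\<^sup>2) * f e x"
    using assms(6) unfolding is_eigenvalue_Hst_def by blast
  interpret Hst_eigenfunction n1 n2 s t l1 l2 k f f' f''
    by unfold_locales (fact assms(1-5) H2 std inF eigen)+
  have "f (Hor 0 0) 0 \<noteq> 0 \<or> f' (Hor 0 0) 0 \<noteq> 0 \<or> f' (Ver 0 0) 0 \<noteq> 0"
  proof (rule ccontr)
    assume "\<not> (f (Hor 0 0) 0 \<noteq> 0 \<or> f' (Hor 0 0) 0 \<noteq> 0 \<or> f' (Ver 0 0) 0 \<noteq> 0)"
    then have "f e x = 0" if "e \<in> edges n1 n2" "x \<in> {0..elen l1 l2 e}" for e x
      using eigenfunction_vanishes_if_origin_data_vanish that by blast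
    with nonzero show False
      by auto
  qed
  then have "f (Hor 0 0) 0 \<noteq> 0 \<or> f' (Hor 0 0) 0 / of_real k \<noteq> 0 \<or> f' (Ver 0 0) 0 / of_real k \<noteq> 0"
    using assms(5) by simp
  with vertex_conditions_origin_sinusoid show ?thesis
    unfolding has_nontrivial_vertex_solution_def by blast
qed

lemma bloch_sinusoid_nonzero:
  assumes "0 < n1" "0 < n2" "0 < l1" "0 < l2" "k \<noteq> 0" and "A \<noteq> 0 \<or> B \<noteq> 0 \<or> D \<noteq> 0"
  shows "\<exists>e\<in>edges n1 n2. \<not> (AE x in lebesgue. x \<in> {0..elen l1 l2 e} \<longrightarrow>
    bloch \<alpha> \<beta> (sinusoid k A B) (sinusoid k A D) e x = 0)"
proof (cases "A \<noteq> 0 \<or> B \<noteq> 0")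
  case True
  then have "\<not> (AE x in lebesgue. x \<in> {0..l1} \<longrightarrow> sinusoid k A B x = sinusoid k 0 0 x)"
    using sinusoid_coeffs_eq_if_AE_eq[OF assms(3,5)] by blast
  with origin_edges_in_edges[OF assms(1,2)] show ?thesis
    by (intro bexI[of _ "Hor 0 0"]) simp_all
next
  case False
  then have "\<not> (AE x in lebesgue. x \<in> {0..l2} \<longrightarrow> sinusoid k A D x = sinusoid k 0 0 x)"
    using sinusoid_coeffs_eq_if_AE_eq[OF assms(4,5)] assms(6) by blast
  with origin_edges_in_edges[OF assms(1,2)] show ?thesis
    by (intro bexI[of _ "Ver 0 0"]) simp_all
qed

lemma nontrivial_vertex_solution_imp_eigenvalue:
  assumes "0 < n1" "0 < n2" "0 < l1" "0 < l2" "k \<noteq> 0"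
    and "has_nontrivial_vertex_solution (phase n1 s ^ (n1 - 1)) (phase n2 t ^ (n2 - 1)) k l1 l2"
  shows "is_eigenvalue_Hst n1 n2 l1 l2 s t (k\<^sup>2)"
proof -
  obtain A B D where nonzero: "A \<noteq> 0 \<or> B \<noteq> 0 \<or> D \<noteq> 0"
    and vc: "vertex_conditions (phase n1 s ^ (n1 - 1)) (phase n2 t ^ (n2 - 1)) l1 l2
      (sinusoid k A B) (sinusoid k A D)
      (sinusoid k (of_real k * B) (- (of_real k * A))) (sinusoid k (of_real k * D) (- (of_real k * A)))"
    using assms(6) unfolding has_nontrivial_vertex_solution_def by blast
  let ?\<alpha> = "phase n1 s" and ?\<beta> = "phase n2 t"
  define f where "f = bloch ?\<alpha> ?\<beta> (sinusoid k A B) (sinusoid k A D)"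
  define f' where "f' = bloch ?\<alpha> ?\<beta>
    (sinusoid k (of_real k * B) (- (of_real k * A))) (sinusoid k (of_real k * D) (- (of_real k * A)))"
  define f'' where "f'' = bloch ?\<alpha> ?\<beta>
    (\<lambda>x. - of_real (k\<^sup>2) * sinusoid k A B x) (\<lambda>x. - of_real (k\<^sup>2) * sinusoid k A D x)"
  have "\<forall>e\<in>edges n1 n2. H2_edge (elen l1 l2 e) (f e) (f' e) (f'' e)"
    unfolding f_def f'_def f''_def by (intro ballI H2_edge_bloch H2_edge_sinusoid)
  moreover have "std_conditions n1 n2 l1 l2 f f'"
    unfolding f_def f'_def using assms(1,2) vc by (rule std_conditions_bloch)
  moreover have "in_F n1 n2 l1 l2 s t f"
    unfolding f_def by (rule in_F_bloch)
  moreover have "\<exists>e\<in>edges n1 n2. \<not> (AE x in lebesgue. x \<in> {0..elen l1 l2 e} \<longrightarrow> f e x = 0)"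
    unfolding f_def using assms(1-5) nonzero by (rule bloch_sinusoid_nonzero)
  moreover have "\<forall>e\<in>edges n1 n2. AE x in lebesgue.
      x \<in> {0..elen l1 l2 e} \<longrightarrow> - f'' e x = of_real (k\<^sup>2) * f e x"
  proof (intro ballI AE_I2 impI)
    fix e x
    show "- f'' e x = of_real (k\<^sup>2) * f e x"
      by (cases e) (simp_all add: f_def f''_def)
  qed
  ultimately show ?thesis
    unfolding is_eigenvalue_Hst_def by blast
qed

section \<open>The secular equation\<close>

lemma nontrivial_kernel_3_iff:
  fixes a11 a12 a13 a21 a22 a23 a31 a32 a33 :: "'a::field"
  shows "(\<exists>x y z. (x \<noteq> 0 \<or> y \<noteq> 0 \<or> z \<noteq> 0) \<and>
      a11 * x + a12 * y + a13 * z = 0 \<and> a21 * x + a22 * y + a23 * z = 0 \<and>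
      a31 * x + a32 * y + a33 * z = 0) \<longleftrightarrow>
    a11 * a22 * a33 + a12 * a23 * a31 + a13 * a21 * a32
      - a11 * a23 * a32 - a12 * a21 * a33 - a13 * a22 * a31 = 0"
proof -
  define M :: "'a^3^3"
    where "M = vector [vector [a11, a12, a13], vector [a21, a22, a23], vector [a31, a32, a33]]"
  have M: "M *v v = vector [a11 * v$1 + a12 * v$2 + a13 * v$3, a21 * v$1 + a22 * v$2 + a23 * v$3,
      a31 * v$1 + a32 * v$2 + a33 * v$3]" for v
    by (simp add: M_def matrix_vector_mult_def sum_3 vec_eq_iff forall_3 vector_3)
  have "(\<exists>v. v \<noteq> 0 \<and> M *v v = 0) \<longleftrightarrow> det M = 0"
    using invertible_det_nz[of M] invertible_left_inverse[of M] matrix_left_invertible_ker[of M]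
    by blast
  moreover have "det M = a11 * a22 * a33 + a12 * a23 * a31 + a13 * a21 * a32
      - a11 * a23 * a32 - a12 * a21 * a33 - a13 * a22 * a31"
    by (simp add: M_def det_3 vector_3)
  moreover have "(\<exists>v. v \<noteq> 0 \<and> M *v v = 0) \<longleftrightarrow> (\<exists>x y z. (x \<noteq> 0 \<or> y \<noteq> 0 \<or> z \<noteq> 0) \<and>
      a11 * x + a12 * y + a13 * z = 0 \<and> a21 * x + a22 * y + a23 * z = 0 \<and>
      a31 * x + a32 * y + a33 * z = 0)"
    (is "?kernel \<longleftrightarrow> (\<exists>x y z. ?nonzero x y z \<and> ?eqs x y z)")
  proof
    assume ?kernel
    then obtain v where "v \<noteq> 0" "M *v v = 0" by blast
    then have "?nonzero (v$1) (v$2) (v$3) \<and> ?eqs (v$1) (v$2) (v$3)"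
      by (auto simp: M vec_eq_iff forall_3 vector_3)
    then show "\<exists>x y z. ?nonzero x y z \<and> ?eqs x y z" by blast
  next
    assume "\<exists>x y z. ?nonzero x y z \<and> ?eqs x y z"
    then obtain x y z where "?nonzero x y z" "?eqs x y z" by blast
    then show ?kernel
      by (intro exI[of _ "vector [x, y, z]"]) (auto simp: M vec_eq_iff forall_3 vector_3)
  qed
  ultimately show ?thesis by simp
qed

(* The rows of the 3 x 3 system are written out in full, zero entries included, so that they
   match nontrivial_kernel_3_iff. *)
lemma vertex_conditions_sinusoid_iff:
  fixes k l1 l2 :: real
  assumes "k \<noteq> 0"
  defines "c1 \<equiv> complex_of_real (cos (k * l1))" and "s1 \<equiv> complex_of_real (sin (k * l1))"
    and "c2 \<equiv> complex_of_real (cos (k * l2))" and "s2 \<equiv> complex_of_real (sin (k * l2))"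
  shows "vertex_conditions p q l1 l2 (sinusoid k A B) (sinusoid k A D)
      (sinusoid k (of_real k * B) (- (of_real k * A))) (sinusoid k (of_real k * D) (- (of_real k * A)))
    \<longleftrightarrow> (1 - p * c1) * A + - (p * s1) * B + 0 * D = 0 \<and> (1 - q * c2) * A + 0 * B + - (q * s2) * D = 0 \<and>
      (p * s1 + q * s2) * A + (1 - p * c1) * B + (1 - q * c2) * D = 0"
proof -
  have eq_iff: "x - y = z \<Longrightarrow> x = y \<longleftrightarrow> z = 0" for x y z :: complex
    by auto
  have "A = p * sinusoid k A B l1 \<longleftrightarrow> (1 - p * c1) * A + - (p * s1) * B + 0 * D = 0"
    by (rule eq_iff) (simp add: sinusoid_def c1_def s1_def algebra_simps)
  moreover have "A = q * sinusoid k A D l2 \<longleftrightarrow> (1 - q * c2) * A + 0 * B + - (q * s2) * D = 0"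
    by (rule eq_iff) (simp add: sinusoid_def c2_def s2_def algebra_simps)
  moreover have "of_real k * B - p * sinusoid k (of_real k * B) (- (of_real k * A)) l1
      + of_real k * D - q * sinusoid k (of_real k * D) (- (of_real k * A)) l2
    = of_real k * ((p * s1 + q * s2) * A + (1 - p * c1) * B + (1 - q * c2) * D)"
    by (simp add: sinusoid_def c1_def s1_def c2_def s2_def algebra_simps)
  ultimately show ?thesis
    using assms(1) by (simp add: vertex_conditions_def)
qed

definition secular_function :: "real \<Rightarrow> real \<Rightarrow> real \<Rightarrow> complex \<Rightarrow> complex \<Rightarrow> complex" where
  "secular_function k l1 l2 a b =
     of_real (sin (k * l2)) * (a - 2 * of_real (cos (k * l1)))
   + of_real (sin (k * l1)) * (b - 2 * of_real (cos (k * l2)))"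

lemma vertex_determinant_eq:
  fixes k l1 l2 :: real
  assumes "p * p' = 1" and "q * q' = 1"
  defines "c1 \<equiv> complex_of_real (cos (k * l1))" and "s1 \<equiv> complex_of_real (sin (k * l1))"
    and "c2 \<equiv> complex_of_real (cos (k * l2))" and "s2 \<equiv> complex_of_real (sin (k * l2))"
  shows "(1 - p * c1) * 0 * (1 - q * c2) + - (p * s1) * - (q * s2) * (p * s1 + q * s2)
      + 0 * (1 - q * c2) * (1 - p * c1) - (1 - p * c1) * - (q * s2) * (1 - p * c1)
      - - (p * s1) * (1 - q * c2) * (1 - q * c2) - 0 * 0 * (p * s1 + q * s2)
    = p * q * secular_function k l1 l2 (p + p') (q + q')"
proof -
  have "c1\<^sup>2 + s1\<^sup>2 = 1" "c2\<^sup>2 + s2\<^sup>2 = 1"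
    unfolding c1_def s1_def c2_def s2_def by (fact of_real_cos_sq_add_sin_sq)+
  with assms(1,2) show ?thesis
    unfolding secular_function_def c1_def[symmetric] s1_def[symmetric] c2_def[symmetric] s2_def[symmetric]
    by algebra
qed

lemma has_nontrivial_vertex_solution_iff:
  assumes "k \<noteq> 0" and "p * p' = 1" and "q * q' = 1"
  shows "has_nontrivial_vertex_solution p q k l1 l2 \<longleftrightarrow> secular_function k l1 l2 (p + p') (q + q') = 0"
proof -
  have "p \<noteq> 0" "q \<noteq> 0"
    using assms(2,3) by auto
  then show ?thesis
    unfolding has_nontrivial_vertex_solution_def vertex_conditions_sinusoid_iff[OF assms(1)]
      nontrivial_kernel_3_iff vertex_determinant_eq[OF assms(2,3)]
    by simp
qed

lemma Sigma_st_eq_secular: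
  "Sigma_st n1 n2 l1 l2 s t k = \<i> * cis (k * l1) * cis (k * l2) *
     secular_function k l1 l2 (of_real (2 * cos (2 * pi * real s / real n1)))
       (of_real (2 * cos (2 * pi * real t / real n2)))"
proof -
  define X Y where "X = cis (k * l1)" and "Y = cis (k * l2)"
  define a b where "a = complex_of_real (2 * cos (2 * pi * real s / real n1))"
    and "b = complex_of_real (2 * cos (2 * pi * real t / real n2))"
  have exp_cis: "exp (\<i> * complex_of_real (k * L)) = cis (k * L)" for L
    by (simp add: cis_conv_exp)
  have "cis (k * (l1 + 2 * l2)) = X * Y\<^sup>2" "cis (k * (2 * l1 + l2)) = X\<^sup>2 * Y"
    "cis (k * (2 * (l1 + l2))) = X\<^sup>2 * Y\<^sup>2"
    unfolding X_def Y_def power2_eq_square cis_mult by (simp_all add: algebra_simps)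
  then have "Sigma_st n1 n2 l1 l2 s t k
      = 1 - a / 2 * X - b / 2 * Y + a / 2 * (X * Y\<^sup>2) + b / 2 * (X\<^sup>2 * Y) - X\<^sup>2 * Y\<^sup>2"
    unfolding Sigma_st_def Let_def exp_cis a_def b_def X_def Y_def by simp
  also have "\<dots> = X * Y * (a / 2 * (Y - cnj Y) + b / 2 * (X - cnj X) - (X * Y - cnj (X * Y)))"
  proof -
    have "X * cnj X = 1" "Y * cnj Y = 1"
      by (simp_all add: X_def Y_def cis_cnj cis_mult)
    then show ?thesis
      unfolding complex_cnj_mult by algebra
  qed
  also have "\<dots> = \<i> * X * Y * secular_function k l1 l2 a b"
    unfolding complex_diff_cnj secular_function_def
    by (simp add: X_def Y_def cis_mult sin_add algebra_simps)
  finally show ?thesis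
    by (simp add: X_def Y_def a_def b_def)
qed

theorem mainTheorem4:
  fixes n1 n2 s t :: nat and l1 l2 k :: real
  assumes "n1 \<ge> 3" and "n2 \<ge> 3" and "l1 > 0" and "l2 > 0"
    and "s < n1" and "t < n2" and "k \<noteq> 0"
  shows "is_eigenvalue_Hst n1 n2 l1 l2 s t (k^2) \<longleftrightarrow> Sigma_st n1 n2 l1 l2 s t k = 0"
proof -
  \<comment> \<open>only \<open>n1, n2 > 0\<close> is used\<close>
  have n: "0 < n1" "0 < n2"
    using assms(1,2) by auto
  let ?p = "phase n1 s ^ (n1 - 1)" and ?q = "phase n2 t ^ (n2 - 1)"
  have "?p * phase n1 s = 1" "?q * phase n2 t = 1"
    using phase_mult_pow_pred[OF n(1)] phase_mult_pow_pred[OF n(2)] by (simp_all only: mult.commute)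
  note vertex_iff = has_nontrivial_vertex_solution_iff[OF assms(7) this]
  have "is_eigenvalue_Hst n1 n2 l1 l2 s t (k^2) \<longleftrightarrow> has_nontrivial_vertex_solution ?p ?q k l1 l2"
    using eigenvalue_imp_nontrivial_vertex_solution[OF n assms(3,4,7)]
      nontrivial_vertex_solution_imp_eigenvalue[OF n assms(3,4,7)] by blast
  also have "\<dots> \<longleftrightarrow> secular_function k l1 l2 (?p + phase n1 s) (?q + phase n2 t) = 0"
    by (rule vertex_iff)
  also have "\<dots> \<longleftrightarrow> Sigma_st n1 n2 l1 l2 s t k = 0"
    unfolding Sigma_st_eq_secular phase_pow_pred_add_phase[OF n(1)] phase_pow_pred_add_phase[OF n(2)]
    by simp
  finally show ?thesis .
qed

end
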